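(* Let $\mathcal{A}=(\Sigma,Q,I,F,\delta)$ be an NFA, for each $w\in\Sigma$ let $T^{(w)}$ be its $|Q|\times|Q|$ Boolean transition matrix, and let $\mathcal{A}_{\mathrm{SS}}$ be the subset automaton of $\mathcal{A}$. Then $$|\mathcal{A}_{\mathrm{SS}}|\le 1+\sum_{w\in\Sigma}\left|\mathcal{R}(T^{(w)})\right|,$$ where $\mathcal{R}(T)$ denotes the range of the matrix $T$ over the Boolean semifield.
   Context: An NFA is $\mathcal{A}=(\Sigma,Q,I,F,\delta)$ with finite alphabet $\Sigma$, finite state set $Q=\{q_1,\dots,q_n\}$, initial states $I$, accepting states $F$, transitions $\delta\subseteq Q\times\Sigma\times Q$ ($\varepsilon$-free). The Boolean semifield is $\mathbb{B}=(\{0,1\},\vee,\wedge,0,1)$. The transition matrix $T^{(w)}\in\mathbb{B}^{n\times n}$ has $T^{(w)}_{i,j}=1$ iff $(q_i,w,q_j)\in\delta$. The range $\mathcal{R}(T)$ of a Boolean matrix $T$ is the set $\{Tv: v\in\mathbb{B}^n\}$ with Boolean matrix–vector multiplication. The subset automaton $\mathcal{A}_{\mathrm{SS}}$ is the DFA whose states are exactly the subsets $\mathcal{Q}\subseteq Q$ reachable from $\mathcal{Q}_I=I$ by repeatedly applying, for $w\in\Sigma$, the map $\mathcal{Q}\mapsto\{q':(q,w,q')\in\delta,\ q\in\mathcal{Q}\}$ (including the empty set if reachable); $|\mathcal{A}_{\mathrm{SS}}|$ is its number of states. *)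

theory Defs
  imports Main
begin

text \<open>States are the elements of a finite type 'q (Q = UNIV), letters have type 'a,
  the alphabet is a finite set Sigma.\<close>

definition trans_mat :: "('q \<times> 'a \<times> 'q) set \<Rightarrow> 'a \<Rightarrow> 'q \<Rightarrow> 'q \<Rightarrow> bool" where
  "trans_mat \<delta> w i j \<longleftrightarrow> (i, w, j) \<in> \<delta>"

definition bmat_vec :: "('q \<Rightarrow> 'q \<Rightarrow> bool) \<Rightarrow> ('q \<Rightarrow> bool) \<Rightarrow> ('q \<Rightarrow> bool)" where
  "bmat_vec T v = (\<lambda>i. \<exists>j. T i j \<and> v j)"

definition bmat_range :: "('q \<Rightarrow> 'q \<Rightarrow> bool) \<Rightarrow> ('q \<Rightarrow> bool) set" where
  "bmat_range T = {bmat_vec T v | v. True}"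

definition subset_step :: "('q \<times> 'a \<times> 'q) set \<Rightarrow> 'a \<Rightarrow> 'q set \<Rightarrow> 'q set" where
  "subset_step \<delta> w S = {q'. \<exists>q\<in>S. (q, w, q') \<in> \<delta>}"

inductive_set ss_states :: "'a set \<Rightarrow> ('q \<times> 'a \<times> 'q) set \<Rightarrow> 'q set \<Rightarrow> 'q set set"
  for \<Sigma> \<delta> I where
  init: "I \<in> ss_states \<Sigma> \<delta> I"
| step: "S \<in> ss_states \<Sigma> \<delta> I \<Longrightarrow> w \<in> \<Sigma> \<Longrightarrow> subset_step \<delta> w S \<in> ss_states \<Sigma> \<delta> I"

end

theory Submission
  imports Defs
begin

text \<open>Every subset state other than the initial one is the image of a reachable state under
  the step map of some letter w, and the image of that step map is (up to Collect) the range
  of the transpose T' of the transition matrix T of w. The ranges of T' and T have equal size: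
  v \<mapsto> \<not> T (\<not> v) maps the range of T' injectively into the range of T, because
  T' (\<not> T (\<not> v)) = v for every v in the range of T'.\<close>

definition bmat_transpose :: "('q \<Rightarrow> 'q \<Rightarrow> bool) \<Rightarrow> 'q \<Rightarrow> 'q \<Rightarrow> bool" where
  "bmat_transpose T = (\<lambda>i j. T j i)"

lemma bmat_transpose_transpose [simp]: "bmat_transpose (bmat_transpose T) = T"
  by (simp add: bmat_transpose_def)

lemma bmat_vec_transpose_complement:
  assumes "v \<in> bmat_range (bmat_transpose T)"
  shows "bmat_vec (bmat_transpose T) (\<lambda>i. \<not> bmat_vec T (\<lambda>j. \<not> v j) i) = v"
proof -
  obtain u where "v = bmat_vec (bmat_transpose T) u"
    using assms by (auto simp: bmat_range_def)
  then show ?thesis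
    by (fastforce simp: bmat_vec_def bmat_transpose_def)
qed

lemma card_bmat_range_transpose_le:
  fixes T :: "'q::finite \<Rightarrow> 'q \<Rightarrow> bool"
  shows "card (bmat_range (bmat_transpose T)) \<le> card (bmat_range T)"
proof -
  let ?f = "\<lambda>v. bmat_vec T (\<lambda>j. \<not> v j)"
  have "inj_on ?f (bmat_range (bmat_transpose T))"
    by (rule inj_on_inverseI[where g = "\<lambda>v. bmat_vec (bmat_transpose T) (\<lambda>i. \<not> v i)"])
      (rule bmat_vec_transpose_complement)
  moreover have "?f ` bmat_range (bmat_transpose T) \<subseteq> bmat_range T"
    by (auto simp: bmat_range_def)
  ultimately show ?thesis
    by (intro card_inj_on_le) auto
qed

lemma card_bmat_range_transpose:
  fixes T :: "'q::finite \<Rightarrow> 'q \<Rightarrow> bool"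
  shows "card (bmat_range (bmat_transpose T)) = card (bmat_range T)"
  using card_bmat_range_transpose_le[of T] card_bmat_range_transpose_le[of "bmat_transpose T"]
  by simp

lemma range_subset_step:
  "range (subset_step \<delta> w) = Collect ` bmat_range (bmat_transpose (trans_mat \<delta> w))"
proof -
  have "subset_step \<delta> w S = Collect (bmat_vec (bmat_transpose (trans_mat \<delta> w)) (\<lambda>q. q \<in> S))"
    for S
    by (auto simp: subset_step_def bmat_vec_def bmat_transpose_def trans_mat_def)
  then show ?thesis
    by (auto simp: bmat_range_def image_iff intro!: exI[where x = "Collect _"])
qed

lemma card_range_subset_step:
  fixes \<delta> :: "('q::finite \<times> 'a \<times> 'q) set"
  shows "card (range (subset_step \<delta> w)) = card (bmat_range (trans_mat \<delta> w))"
  unfolding range_subset_step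
  by (subst card_image) (auto simp: inj_on_def card_bmat_range_transpose)

lemma ss_states_subset:
  "ss_states \<Sigma> \<delta> I \<subseteq> insert I (\<Union>w\<in>\<Sigma>. range (subset_step \<delta> w))"
proof
  fix S assume "S \<in> ss_states \<Sigma> \<delta> I"
  then show "S \<in> insert I (\<Union>w\<in>\<Sigma>. range (subset_step \<delta> w))"
    by (induction rule: ss_states.induct) auto
qed

theorem lemma2:
  fixes \<Sigma> :: "'a set" and I F :: "'q::finite set" and \<delta> :: "('q \<times> 'a \<times> 'q) set"
  assumes "finite \<Sigma>"
    and "\<delta> \<subseteq> UNIV \<times> \<Sigma> \<times> UNIV"
  shows "card (ss_states \<Sigma> \<delta> I) \<le> 1 + (\<Sum>w\<in>\<Sigma>. card (bmat_range (trans_mat \<delta> w)))"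
proof -
  have "card (ss_states \<Sigma> \<delta> I) \<le> card (insert I (\<Union>w\<in>\<Sigma>. range (subset_step \<delta> w)))"
    by (intro card_mono ss_states_subset) auto
  also have "\<dots> \<le> 1 + card (\<Union>w\<in>\<Sigma>. range (subset_step \<delta> w))"
    by (simp add: card_insert_if)
  also have "card (\<Union>w\<in>\<Sigma>. range (subset_step \<delta> w)) \<le> (\<Sum>w\<in>\<Sigma>. card (range (subset_step \<delta> w)))"
    using \<open>finite \<Sigma>\<close> by (rule card_UN_le)
  also have "\<dots> = (\<Sum>w\<in>\<Sigma>. card (bmat_range (trans_mat \<delta> w)))"
    by (simp add: card_range_subset_step)
  finally show ?thesis by simp
qed

end
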